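(* Let $v$ be a nonzero integer, $t$ a positive rational number, and $f(a)=(a^v,q^t/a^v;q^t)_\infty$. Suppose that $f(aq^\alpha)=\dfrac{1}{(-1)^\rho a^w q^s}f(a)$ for some $\alpha,w\in\mathbb Z$, $\rho\in\{0,1\}$, $s\in\mathbb Q$. Then $v$ divides $w$, and $\alpha v$ is an integer multiple of $t$.
   Context: $|q|<1$ and $(x;q)_\infty=\prod_{k\ge0}(1-xq^k)$, $(x,y;q)_\infty=(x;q)_\infty(y;q)_\infty$. *)

theory Defs
  imports "HOL-Analysis.Analysis"
begin

definition qpoch :: "complex \<Rightarrow> complex \<Rightarrow> complex" where
  "qpoch x q = (\<Prod>k. 1 - x * q ^ k)"

definition ftheta :: "int \<Rightarrow> rat \<Rightarrow> complex \<Rightarrow> complex \<Rightarrow> complex" where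
  "ftheta v t q a =
     qpoch (a powi v) (q powr of_real (of_rat t)) *
     qpoch (q powr of_real (of_rat t) / a powi v) (q powr of_real (of_rat t))"

end

theory Submission
  imports Defs
begin

text \<open>With \<open>p = q^t\<close> and \<open>\<theta>(x) = (x, p/x; p)\<^sub>\<infinity>\<close> we have \<open>f(a) = \<theta>(a^v)\<close>, and \<open>\<theta>\<close> vanishes
  exactly at the integer powers of \<open>p\<close>. Putting \<open>a = 1\<close> in the functional equation kills the
  right-hand side, so \<open>q^{\<alpha>v}\<close> is a power \<open>p^k = q^{kt}\<close>, and comparing moduli gives \<open>\<alpha>v = kt\<close>.
  Replacing \<open>a\<close> by \<open>a\<zeta>\<close> with \<open>\<zeta> = e^{2\<pi>i/v}\<close> leaves the left-hand side unchanged; choosing \<open>a^v = -1\<close>,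
  where \<open>\<theta>\<close> does not vanish, forces \<open>\<zeta>^w = 1\<close>, i.e. \<open>v | w\<close>.\<close>

lemma qpoch_has_prod:
  assumes "norm p < 1"
  shows "(\<lambda>k. 1 - x * p ^ k) has_prod qpoch x p"
proof -
  have "summable (\<lambda>k. norm x * norm p ^ k)"
    using assms by (intro summable_mult summable_geometric) auto
  then have "summable (\<lambda>k. norm ((1 - x * p ^ k) - 1))"
    by (simp add: norm_mult norm_power)
  then have "convergent_prod (\<lambda>k. 1 - x * p ^ k)"
    by (intro abs_convergent_prod_imp_convergent_prod summable_imp_abs_convergent_prod)
  then show ?thesis
    unfolding qpoch_def by (simp add: convergent_prod_has_prod_iff)
qed

lemma qpoch_eq_0_iff:
  assumes "norm p < 1"
  shows "qpoch x p = 0 \<longleftrightarrow> (\<exists>k. x * p ^ k = 1)"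
  using has_prod_eq_0_iff[OF qpoch_has_prod[OF assms]] by (auto simp: eq_commute[of 0])

lemma qpoch_nonzero:
  assumes "norm p < 1" "norm x \<le> 1" "x \<noteq> 1"
  shows "qpoch x p \<noteq> 0"
proof
  assume "qpoch x p = 0"
  then obtain k where k: "x * p ^ k = 1"
    using qpoch_eq_0_iff[OF assms(1)] by blast
  with assms(3) obtain m where "k = Suc m" by (cases k) auto
  have "norm p ^ Suc m < 1"
    using assms(1) power_Suc_le_self[of "norm p" m] by simp
  then have "norm x * norm p ^ k < 1"
    using assms(2) \<open>k = Suc m\<close> mult_left_le_one_le[of "norm p ^ k" "norm x"] by simp
  then have "norm (x * p ^ k) < 1"
    by (simp add: norm_mult norm_power)
  with k show False by simp
qed

definition qtheta :: "complex \<Rightarrow> complex \<Rightarrow> complex" where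
  "qtheta x p = qpoch x p * qpoch (p / x) p"

lemma ftheta_eq_qtheta: "ftheta v t q a = qtheta (a powi v) (q powr of_real (of_rat t))"
  unfolding ftheta_def qtheta_def ..

lemma qtheta_1_eq_0: "norm p < 1 \<Longrightarrow> qtheta 1 p = 0"
  unfolding qtheta_def by (metis mult_1 mult_zero_left power_0 qpoch_eq_0_iff)

lemma qtheta_minus_1_nonzero:
  assumes "norm p < 1"
  shows "qtheta (-1) p \<noteq> 0"
proof -
  have "norm (- p) < 1" "- p \<noteq> 1"
    using assms by (auto simp: minus_equation_iff[of p])
  with assms show ?thesis
    unfolding qtheta_def by (simp add: qpoch_nonzero)
qed

lemma qtheta_eq_0_imp_power_int:
  assumes "norm p < 1" "p \<noteq> 0" "qtheta x p = 0"
  shows "\<exists>k::int. x = p powi k"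
proof -
  from assms(3) have "qpoch x p = 0 \<or> qpoch (p / x) p = 0"
    unfolding qtheta_def by simp
  then consider k where "x * p ^ k = 1" | k where "p / x * p ^ k = 1"
    unfolding qpoch_eq_0_iff[OF assms(1)] by blast
  then show ?thesis
  proof cases
    case (1 k)
    then have "x = p powi (- int k)"
      using assms(2) by (simp add: power_int_minus field_simps)
    then show ?thesis ..
  next
    case (2 k)
    then have "x \<noteq> 0" by auto
    with 2 have "x = p ^ Suc k"
      by (simp add: field_simps)
    then have "x = p powi int (Suc k)"
      by (simp only: power_int_of_nat)
    then show ?thesis ..
  qed
qed

lemma power_int_eq_powr_power_int_imp_eq:
  fixes q :: complex and m k :: int and r :: real
  assumes "q \<noteq> 0" "norm q \<noteq> 1" "q powi m = (q powr of_real r) powi k"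
  shows "of_int m = of_int k * r"
proof -
  have "norm q powr of_int m = norm q powr (of_int k * r)"
    using arg_cong[OF assms(3), of norm] assms(1)
    by (simp add: norm_power_int norm_powr_real_powr' powr_real_of_int'[symmetric] powr_powr mult.commute)
  with assms(1,2) show ?thesis
    by (simp add: powr_inj)
qed

lemma root_of_unity_power_int_eq_1_imp_dvd:
  fixes v w :: int
  assumes "v \<noteq> 0" "exp (2 * pi * \<i> / of_int v) powi w = 1"
  shows "v dvd w"
proof -
  obtain n :: int where "2 * pi * w / v = 2 * pi * n"
    using assms(2) unfolding exp_power_int exp_eq_1 by (auto simp: field_simps)
  with assms(1) have "w = n * v"
    by (simp add: field_simps flip: of_int_mult)
  then show ?thesis by simp
qed

lemma qtheta_quasiperiodic_imp_dvd:
  fixes v w :: int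
  assumes "v \<noteq> 0" "norm p < 1" "c \<noteq> 0"
    and shift: "\<And>a. a \<noteq> 0 \<Longrightarrow> qtheta (a powi v * Q) p = qtheta (a powi v) p / (a powi w * c)"
  shows "v dvd w"
proof -
  \<comment> \<open>Both \<open>a\<close> and \<open>a z\<close> are \<open>v\<close>-th roots of \<open>-1\<close>, so the shift relation gives two quotients
    of the same nonzero value \<open>qtheta (-1) p\<close>; their factors differ exactly by \<open>z powi w\<close>.\<close>
  define a where "a = exp (pi * \<i> / of_int v)"
  define z where "z = exp (2 * pi * \<i> / of_int v)"
  have "a \<noteq> 0" "z \<noteq> 0"
    by (simp_all add: a_def z_def)
  have "a powi v = -1" "z powi v = 1"
    using assms(1) by (simp_all add: a_def z_def exp_power_int exp_eq_1)
  then have "qtheta (-1) p / (a powi w * c) = qtheta (-1) p / (a powi w * c * z powi w)"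
    using shift[of a] shift[of "a * z"] \<open>a \<noteq> 0\<close> \<open>z \<noteq> 0\<close>
    by (simp add: power_int_mult_distrib mult_ac)
  with qtheta_minus_1_nonzero[OF assms(2)] \<open>a \<noteq> 0\<close> assms(3) have "z powi w = 1"
    by (simp add: field_simps)
  with assms(1) show ?thesis
    unfolding z_def by (rule root_of_unity_power_int_eq_1_imp_dvd)
qed

theorem lemma2p2:
  fixes q :: complex and v \<alpha> w :: int and t s :: rat and \<rho> :: nat
  assumes "0 < norm q" and "norm q < 1"
    and "v \<noteq> 0" and "t > 0" and "\<rho> \<in> {0, 1}"
    and "\<forall>a::complex. a \<noteq> 0 \<longrightarrow>
           ftheta v t q (a * q powi \<alpha>) =
           ftheta v t q a / ((-1) ^ \<rho> * a powi w * q powr of_real (of_rat s))"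
  shows "v dvd w \<and> (\<exists>k::int. of_int (\<alpha> * v) = of_int k * t)"
proof
  \<comment> \<open>The sign \<open>(-1) ^ \<rho>\<close> is absorbed into the nonzero constant \<open>c\<close>.\<close>
  define p where "p = q powr of_real (of_rat t)"
  define c where "c = (-1) ^ \<rho> * q powr of_real (of_rat s)"
  have "q \<noteq> 0" using assms(1) by auto
  have "norm p < 1"
    using powr_less_mono2[of "of_rat t" "norm q" 1] assms(2,4)
    by (simp add: p_def norm_powr_real_powr')
  have "p \<noteq> 0" "c \<noteq> 0"
    using \<open>q \<noteq> 0\<close> by (simp_all add: p_def c_def)
  have shift: "qtheta (a powi v * q powi (\<alpha> * v)) p = qtheta (a powi v) p / (a powi w * c)"
    if "a \<noteq> 0" for a
    using assms(6) that
    by (simp add: ftheta_eq_qtheta p_def c_def power_int_mult_distrib power_int_mult mult_ac)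
  then show "v dvd w"
    using qtheta_quasiperiodic_imp_dvd assms(3) \<open>norm p < 1\<close> \<open>c \<noteq> 0\<close> by blast
  have "qtheta (q powi (\<alpha> * v)) p = 0"
    using shift[of 1] qtheta_1_eq_0[OF \<open>norm p < 1\<close>] by simp
  then obtain k where "q powi (\<alpha> * v) = p powi k"
    using qtheta_eq_0_imp_power_int \<open>norm p < 1\<close> \<open>p \<noteq> 0\<close> by blast
  then have "of_int (\<alpha> * v) = of_int k * (of_rat t :: real)"
    using power_int_eq_powr_power_int_imp_eq[of q] \<open>q \<noteq> 0\<close> assms(2) unfolding p_def
    by (metis less_irrefl)
  then have "of_int (\<alpha> * v) = of_int k * t"
    by (metis of_rat_eq_iff of_rat_mult of_rat_of_int_eq)
  then show "\<exists>k::int. of_int (\<alpha> * v) = of_int k * t" ..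
qed

end
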